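(* Let $n\ge1$, let $\Sigma$ be a finite alphabet and ${\it td}>0$ with $T=\lfloor n\cdot{\it td}\rfloor$ satisfying $n\le T\le n^2$. Consider a random automaton on $n$ states in which, for each symbol $a\in\Sigma$ independently, the set of $a$-labelled transitions is a uniformly random $T$-element subset of the $n^2$ possible pairs of states. Let $U(n,|\Sigma|,{\it td})$ be the probability that every state has at least one outgoing transition labelled by every symbol of $\Sigma$. Then $U(n,|\Sigma|,{\it td})=\big(\alpha(n,T)/\beta(n,T)\big)^{|\Sigma|}$, where $\beta(n,T)=\binom{n^2}{T}$ and $\alpha(n,T)=\sum_{m=n}^{n^2}\binom{m-n}{T-n}\sum_{i=0}^{n}(-1)^i\binom{n}{i}\binom{m-in-1}{n-1}$.
   Context: Binomial coefficient convention: $\binom{a}{b}=0$ whenever $a<b$ (including negative $a$). This is the Tabakov–Vardi random automaton model with $n$ states, alphabet $\Sigma$ and transition density ${\it td}$. *)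

theory Defs
  imports "HOL-Probability.Probability"
begin

definition ibinom :: "int \<Rightarrow> int \<Rightarrow> int" where
  "ibinom a b = (if a < b \<or> b < 0 then 0 else int (nat a choose nat b))"

text \<open>States are 0..n-1. A (transition structure of an) automaton assigns to each symbol
  of the alphabet a set of transitions (pairs of states); off the alphabet it is empty.\<close>
definition TV_autos :: "nat \<Rightarrow> 'a set \<Rightarrow> nat \<Rightarrow> ('a \<Rightarrow> (nat \<times> nat) set) set" where
  "TV_autos n \<Sigma> T = {\<delta>. (\<forall>a\<in>\<Sigma>. \<delta> a \<subseteq> {0..<n} \<times> {0..<n} \<and> card (\<delta> a) = T)
                           \<and> (\<forall>a. a \<notin> \<Sigma> \<longrightarrow> \<delta> a = {})}"

text \<open>Uniform distribution on the sample space: equivalently, for each symbol independently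
  a uniformly random T-subset of the n^2 pairs.\<close>
definition TV_random_aut :: "nat \<Rightarrow> 'a set \<Rightarrow> real \<Rightarrow> ('a \<Rightarrow> (nat \<times> nat) set) pmf" where
  "TV_random_aut n \<Sigma> td = pmf_of_set (TV_autos n \<Sigma> (nat \<lfloor>real n * td\<rfloor>))"

definition total_aut :: "nat \<Rightarrow> 'a set \<Rightarrow> ('a \<Rightarrow> (nat \<times> nat) set) \<Rightarrow> bool" where
  "total_aut n \<Sigma> \<delta> = (\<forall>q<n. \<forall>a\<in>\<Sigma>. \<exists>q'. (q, q') \<in> \<delta> a)"

definition U_prob :: "nat \<Rightarrow> 'a set \<Rightarrow> real \<Rightarrow> real" where
  "U_prob n \<Sigma> td = measure_pmf.prob (TV_random_aut n \<Sigma> td) {\<delta>. total_aut n \<Sigma> \<delta>}"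

definition alpha_TV :: "nat \<Rightarrow> nat \<Rightarrow> int" where
  "alpha_TV n T = (\<Sum>m = n..n^2. ibinom (int m - int n) (int T - int n) *
      (\<Sum>i = 0..n. (-1)^i * int (n choose i) * ibinom (int m - int i * int n - 1) (int n - 1)))"

definition beta_TV :: "nat \<Rightarrow> nat \<Rightarrow> nat" where
  "beta_TV n T = (n^2) choose T"

end

theory Submission
  imports Defs
begin

text \<open>The symbols are independent and identically distributed, so it suffices to count the
  T-sets of cells of the n\<times>n grid that meet every row. Sort such a set by its profile: the list
  whose i-th entry is one plus the largest column used in row i. A set with profile xs consists of
  the n cells that realise the profile together with T - n of the
  \<open>sum_list xs - n\<close> cells strictly to their left, so it is counted by a binomial coefficient
  depending only on \<open>sum_list xs\<close>. The number of profiles with a given sum m is the number of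
  compositions of m into n parts from {1..n}, which inclusion--exclusion (here an induction on
  the number of parts through the hockey-stick identity) gives as the inner sum of \<open>alpha_TV\<close>.\<close>

lemma ibinom_of_nat: "ibinom (int a) (int b) = int (a choose b)"
  unfolding ibinom_def by (auto simp: binomial_eq_0)

lemma ibinom_Suc_pascal:
  "ibinom a (int (Suc r)) = ibinom (a - 1) (int (Suc r)) + ibinom (a - 1) (int r)"
proof (cases "a \<le> int r")
  case True
  then show ?thesis unfolding ibinom_def by auto
next
  case False
  then have "a = int (Suc (nat (a - 1)))" "r \<le> nat (a - 1)" by auto
  then obtain k where k: "a = int (Suc k)" "r \<le> k" by blast
  have pred: "int (Suc k) - 1 = int k" by simp
  show ?thesis unfolding ibinom_def k(1) pred using k(2) by (auto simp del: of_nat_Suc)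
qed

lemma ibinom_hockey_stick:
  "(\<Sum>k=1..b. ibinom (a - int k) (int r)) = ibinom a (int (Suc r)) - ibinom (a - int b) (int (Suc r))"
proof (induction b)
  case (Suc b)
  have "ibinom (a - int b) (int (Suc r)) =
      ibinom (a - int (Suc b)) (int (Suc r)) + ibinom (a - int (Suc b)) (int r)"
    using ibinom_Suc_pascal[of "a - int b" r] by (simp add: algebra_simps)
  then show ?case using Suc by simp
qed simp

lemma sum_alternating_binomial_Suc:
  fixes h :: "nat \<Rightarrow> 'c::comm_ring_1"
  shows "(\<Sum>i\<le>Suc r. (-1)^i * of_nat (Suc r choose i) * h i) =
    (\<Sum>i\<le>r. (-1)^i * of_nat (r choose i) * (h i - h (Suc i)))"
proof -
  have shift: "(\<Sum>i\<le>Suc r. (-1)^i * of_nat (s choose i) * h i) =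
      h 0 + (\<Sum>i\<le>r. (-1)^(Suc i) * of_nat (s choose Suc i) * h (Suc i))" for s
    by (subst sum.atMost_Suc_shift) simp
  have "(\<Sum>i\<le>r. (-1)^i * of_nat (r choose i) * h i) =
      (\<Sum>i\<le>Suc r. (-1)^i * of_nat (r choose i) * h i)"
    by (simp add: binomial_eq_0)
  also have "\<dots> = h 0 + (\<Sum>i\<le>r. (-1)^(Suc i) * of_nat (r choose Suc i) * h (Suc i))"
    by (rule shift)
  finally have lower: "(\<Sum>i\<le>r. (-1)^i * of_nat (r choose i) * h i) = \<dots>" .
  have pascal: "(\<Sum>i\<le>r. (-1)^(Suc i) * of_nat (Suc r choose Suc i) * h (Suc i)) =
      (\<Sum>i\<le>r. (-1)^(Suc i) * of_nat (r choose Suc i) * h (Suc i)) -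
      (\<Sum>i\<le>r. (-1)^i * of_nat (r choose i) * h (Suc i))"
    unfolding sum_subtractf[symmetric] by (intro sum.cong refl) (simp add: algebra_simps)
  show ?thesis
    unfolding shift pascal right_diff_distrib sum_subtractf lower by simp
qed

definition bounded_words :: "nat \<Rightarrow> nat \<Rightarrow> nat list set" where
  "bounded_words b r = {xs. set xs \<subseteq> {1..b} \<and> length xs = r}"

definition bounded_compositions :: "nat \<Rightarrow> nat \<Rightarrow> nat \<Rightarrow> nat list set" where
  "bounded_compositions b r m = {xs \<in> bounded_words b r. sum_list xs = m}"

text \<open>The inclusion--exclusion count of \<open>bounded_compositions b r m\<close>, taken at an integer m so
  that it vanishes for m \<le> 0 without case distinctions in the recursion.\<close>
definition bounded_composition_number :: "nat \<Rightarrow> nat \<Rightarrow> int \<Rightarrow> int" where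
  "bounded_composition_number b r m =
    (\<Sum>i\<le>r. (-1)^i * int (r choose i) * ibinom (m - int i * int b - 1) (int r - 1))"

lemma finite_bounded_words [simp]: "finite (bounded_words b r)"
  using finite_lists_length_eq[of "{1..b}" r] unfolding bounded_words_def by simp

lemma bounded_words_nth: "xs \<in> bounded_words b r \<Longrightarrow> i < r \<Longrightarrow> xs ! i \<in> {1..b}"
  unfolding bounded_words_def using nth_mem by blast

lemma card_bounded_compositions_0: "card (bounded_compositions b 0 m) = (if m = 0 then 1 else 0)"
proof -
  have "bounded_compositions b 0 m = (if m = 0 then {[]} else {})"
    by (auto simp: bounded_compositions_def bounded_words_def)
  then show ?thesis by simp
qed

lemma card_bounded_compositions_Suc:
  "card (bounded_compositions b (Suc r) m) =
    (\<Sum>k=1..b. if k \<le> m then card (bounded_compositions b r (m - k)) else 0)"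
proof -
  have "bounded_compositions b (Suc r) m =
      (\<Union>k\<in>{k\<in>{1..b}. k \<le> m}. Cons k ` bounded_compositions b r (m - k))"
    by (auto simp: bounded_compositions_def bounded_words_def length_Suc_conv)
  then have "card (bounded_compositions b (Suc r) m) =
      (\<Sum>k\<in>{k\<in>{1..b}. k \<le> m}. card (Cons k ` bounded_compositions b r (m - k)))"
    by (auto intro: card_UN_disjoint simp: bounded_compositions_def)
  also have "\<dots> = (\<Sum>k\<in>{k\<in>{1..b}. k \<le> m}. card (bounded_compositions b r (m - k)))"
    by (simp add: card_image)
  also have "\<dots> = (\<Sum>k=1..b. if k \<le> m then card (bounded_compositions b r (m - k)) else 0)"
    by (rule sum.inter_filter) simp
  finally show ?thesis .
qed

lemma bounded_composition_number_nonpos: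
  assumes "m \<le> 0"
  shows "bounded_composition_number b (Suc r) m = 0"
  unfolding bounded_composition_number_def
proof (intro sum.neutral ballI)
  fix i
  have "0 \<le> int i * int b" by simp
  then have "m - int i * int b - 1 < int (Suc r) - 1" using assms by linarith
  then show "(-1)^i * int (Suc r choose i) * ibinom (m - int i * int b - 1) (int (Suc r) - 1) = 0"
    unfolding ibinom_def by simp
qed

lemma bounded_composition_number_1:
  "bounded_composition_number b (Suc 0) (int m) = (if 1 \<le> m \<and> m \<le> b then 1 else 0)"
  by (auto simp: bounded_composition_number_def ibinom_def)

lemma bounded_composition_number_Suc:
  "bounded_composition_number b (Suc (Suc r)) m =
    (\<Sum>k=1..b. bounded_composition_number b (Suc r) (m - int k))"
proof -
  let ?h = "\<lambda>i. ibinom (m - int i * int b - 1) (int (Suc r))"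
  have "(\<Sum>k=1..b. bounded_composition_number b (Suc r) (m - int k)) =
      (\<Sum>k=1..b. \<Sum>i\<le>Suc r. (-1)^i * int (Suc r choose i) *
        ibinom (m - int i * int b - 1 - int k) (int r))"
    unfolding bounded_composition_number_def by (simp add: algebra_simps)
  also have "\<dots> = (\<Sum>i\<le>Suc r. (-1)^i * int (Suc r choose i) *
        (\<Sum>k=1..b. ibinom (m - int i * int b - 1 - int k) (int r)))"
    unfolding sum_distrib_left by (rule sum.swap)
  also have "\<dots> = (\<Sum>i\<le>Suc r. (-1)^i * int (Suc r choose i) * (?h i - ?h (Suc i)))"
  proof (rule sum.cong[OF refl])
    fix i
    have "m - int (Suc i) * int b - 1 = m - int i * int b - 1 - int b"
      by (simp add: algebra_simps)
    then show "(-1)^i * int (Suc r choose i) *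
        (\<Sum>k=1..b. ibinom (m - int i * int b - 1 - int k) (int r)) =
      (-1)^i * int (Suc r choose i) * (?h i - ?h (Suc i))"
      by (simp only: ibinom_hockey_stick)
  qed
  also have "\<dots> = bounded_composition_number b (Suc (Suc r)) m"
    unfolding sum_alternating_binomial_Suc[where h = ?h, symmetric] bounded_composition_number_def
    by simp
  finally show ?thesis ..
qed

lemma card_bounded_compositions:
  assumes "r \<ge> 1"
  shows "int (card (bounded_compositions b r m)) = bounded_composition_number b r (int m)"
proof -
  obtain s where "r = Suc s" using assms by (cases r) auto
  moreover have "int (card (bounded_compositions b (Suc s) m)) =
      bounded_composition_number b (Suc s) (int m)" for m
  proof (induction s arbitrary: m)
    case 0
    have "card (bounded_compositions b (Suc 0) m) = (\<Sum>k=1..b. if k = m then 1 else 0)"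
      unfolding card_bounded_compositions_Suc card_bounded_compositions_0
      by (intro sum.cong) auto
    then show ?case by (simp add: bounded_composition_number_1)
  next
    case (Suc s)
    have "int (card (bounded_compositions b (Suc (Suc s)) m)) =
        (\<Sum>k=1..b. bounded_composition_number b (Suc s) (int m - int k))"
      unfolding card_bounded_compositions_Suc[of b "Suc s"] of_nat_sum
      by (intro sum.cong) (auto simp: Suc.IH bounded_composition_number_nonpos)
    then show ?case by (simp add: bounded_composition_number_Suc)
  qed
  ultimately show ?thesis by simp
qed

lemma bounded_words_sum_list_bounds:
  "xs \<in> bounded_words b r \<Longrightarrow> r \<le> sum_list xs \<and> sum_list xs \<le> r * b"
  unfolding bounded_words_def by (induction xs arbitrary: r) auto

lemma sum_bounded_words_by_sum_list:
  fixes g :: "nat \<Rightarrow> 'c::comm_semiring_1"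
  shows "(\<Sum>xs\<in>bounded_words b r. g (sum_list xs)) =
    (\<Sum>m=0..r*b. g m * of_nat (card (bounded_compositions b r m)))"
proof -
  have "sum_list ` bounded_words b r \<subseteq> {0..r * b}"
    using bounded_words_sum_list_bounds by auto
  then have "(\<Sum>xs\<in>bounded_words b r. g (sum_list xs)) =
      (\<Sum>m=0..r*b. \<Sum>xs\<in>bounded_compositions b r m. g (sum_list xs))"
    unfolding bounded_compositions_def by (intro sum.group[symmetric]) simp_all
  also have "\<dots> = (\<Sum>m=0..r*b. g m * of_nat (card (bounded_compositions b r m)))"
    by (intro sum.cong refl) (simp add: bounded_compositions_def mult.commute)
  finally show ?thesis .
qed

definition row_covering_sets :: "nat \<Rightarrow> nat \<Rightarrow> nat \<Rightarrow> (nat \<times> nat) set set" where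
  "row_covering_sets r c T =
    {B. B \<subseteq> {0..<r} \<times> {0..<c} \<and> card B = T \<and> (\<forall>q<r. \<exists>q'. (q, q') \<in> B)}"

text \<open>A profile xs stores, for row i, one plus the rightmost column used in that row.\<close>
definition profile_cells :: "nat list \<Rightarrow> (nat \<times> nat) set" where
  "profile_cells xs = (\<lambda>i. (i, xs ! i - 1)) ` {0..<length xs}"

definition cells_left_of_profile :: "nat list \<Rightarrow> (nat \<times> nat) set" where
  "cells_left_of_profile xs = Sigma {0..<length xs} (\<lambda>i. {0..<xs ! i - 1})"

definition sets_with_profile :: "nat list \<Rightarrow> nat \<Rightarrow> (nat \<times> nat) set set" where
  "sets_with_profile xs T =
    {B. profile_cells xs \<subseteq> B \<and> B \<subseteq> cells_left_of_profile xs \<union> profile_cells xs \<and> card B = T}"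

lemma finite_profile_cells [simp]: "finite (profile_cells xs)"
  unfolding profile_cells_def by simp

lemma finite_cells_left_of_profile [simp]: "finite (cells_left_of_profile xs)"
  unfolding cells_left_of_profile_def by simp

lemma card_profile_cells: "card (profile_cells xs) = length xs"
  unfolding profile_cells_def by (subst card_image) (auto simp: inj_on_def)

lemma card_cells_left_of_profile:
  assumes "0 \<notin> set xs"
  shows "card (cells_left_of_profile xs) = sum_list xs - length xs"
proof -
  have "card (cells_left_of_profile xs) = (\<Sum>i<length xs. xs ! i - 1)"
    by (simp add: cells_left_of_profile_def atLeast0LessThan)
  also have "\<dots> = (\<Sum>i<length xs. xs ! i) - (\<Sum>i<length xs. 1)"
    using assms by (intro sum_subtractf_nat) (auto simp: Suc_leI in_set_conv_nth)
  also have "\<dots> = sum_list xs - length xs"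
    by (simp add: sum_list_sum_nth atLeast0LessThan)
  finally show ?thesis .
qed

lemma row_covering_sets_by_profile:
  "row_covering_sets r c T = (\<Union>xs\<in>bounded_words c r. sets_with_profile xs T)"
proof (intro equalityI subsetI)
  fix B assume "B \<in> (\<Union>xs\<in>bounded_words c r. sets_with_profile xs T)"
  then obtain xs where xs: "xs \<in> bounded_words c r" and B: "B \<in> sets_with_profile xs T" by blast
  have len: "length xs = r" using xs by (simp add: bounded_words_def)
  have "B \<subseteq> {0..<r} \<times> {0..<c}"
  proof
    fix p assume "p \<in> B"
    then have "p \<in> cells_left_of_profile xs \<union> profile_cells xs"
      using B by (auto simp: sets_with_profile_def)
    then obtain i j where p: "p = (i, j)" "i < r" "j \<le> xs ! i - 1"
      unfolding cells_left_of_profile_def profile_cells_def len by auto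
    moreover have "xs ! i \<in> {1..c}" using bounded_words_nth[OF xs p(2)] .
    ultimately show "p \<in> {0..<r} \<times> {0..<c}" by auto
  qed
  moreover have "\<exists>q'. (q, q') \<in> B" if "q < r" for q
  proof
    have "(q, xs ! q - 1) \<in> profile_cells xs" using that by (simp add: profile_cells_def len)
    then show "(q, xs ! q - 1) \<in> B" using B by (auto simp: sets_with_profile_def)
  qed
  ultimately show "B \<in> row_covering_sets r c T"
    using B by (auto simp: row_covering_sets_def sets_with_profile_def)
next
  fix B assume B: "B \<in> row_covering_sets r c T"
  define S where "S q = {q'. (q, q') \<in> B}" for q
  have S_sub: "S q \<subseteq> {0..<c}" if "q < r" for q
    using B that by (auto simp: row_covering_sets_def S_def)
  have fin: "finite (S q)" for q
    using B by (auto simp: row_covering_sets_def S_def intro: finite_subset[of _ "{0..<c}"])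
  have Max_S: "Max (S q) \<in> S q" "Max (S q) < c" if "q < r" for q
    using Max_in[OF fin, of q] B S_sub[OF that] that
    by (auto simp: row_covering_sets_def S_def)
  define xs where "xs = map (\<lambda>q. Max (S q) + 1) [0..<r]"
  have "xs \<in> bounded_words c r"
    using Max_S by (auto simp: bounded_words_def xs_def Suc_leI)
  moreover have "B \<in> sets_with_profile xs T"
  proof -
    have "profile_cells xs \<subseteq> B"
      using Max_S by (auto simp: profile_cells_def xs_def S_def)
    moreover have "B \<subseteq> cells_left_of_profile xs \<union> profile_cells xs"
    proof
      fix p assume "p \<in> B"
      then obtain q q' where p: "p = (q, q')" "q < r" "q' \<in> S q"
        using B by (auto simp: row_covering_sets_def S_def)
      then have "q' \<le> Max (S q)" using fin by simp
      then show "p \<in> cells_left_of_profile xs \<union> profile_cells xs"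
        using p by (cases "q' = Max (S q)")
          (auto simp: cells_left_of_profile_def profile_cells_def xs_def)
    qed
    ultimately show ?thesis using B by (simp add: sets_with_profile_def row_covering_sets_def)
  qed
  ultimately show "B \<in> (\<Union>xs\<in>bounded_words c r. sets_with_profile xs T)" by blast
qed

lemma sets_with_profile_disjoint:
  assumes "length xs = length ys" "0 \<notin> set xs" "0 \<notin> set ys" "xs \<noteq> ys"
  shows "sets_with_profile xs T \<inter> sets_with_profile ys T = {}"
proof (rule ccontr)
  assume "sets_with_profile xs T \<inter> sets_with_profile ys T \<noteq> {}"
  then obtain B where B: "B \<in> sets_with_profile xs T" "B \<in> sets_with_profile ys T" by blast
  have le: "u ! i \<le> v ! i"
    if "B \<in> sets_with_profile u T" "B \<in> sets_with_profile v T" "0 \<notin> set u" "0 \<notin> set v"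
      "i < length u" "length u = length v" for u v i
  proof -
    have "(i, u ! i - 1) \<in> B"
      using that(1,5) by (auto simp: sets_with_profile_def profile_cells_def)
    then have "(i, u ! i - 1) \<in> cells_left_of_profile v \<union> profile_cells v"
      using that(2) by (auto simp: sets_with_profile_def)
    then have "u ! i - 1 \<le> v ! i - 1"
      by (auto simp: cells_left_of_profile_def profile_cells_def)
    moreover have "u ! i \<noteq> 0" "v ! i \<noteq> 0"
      using that(3-6) by (metis nth_mem)+
    ultimately show ?thesis by linarith
  qed
  have "xs = ys"
  proof (rule nth_equalityI)
    fix i assume i: "i < length xs"
    with assms(1) have i': "i < length ys" by simp
    show "xs ! i = ys ! i"
      using le[OF B(1,2) assms(2,3) i assms(1)] le[OF B(2,1) assms(3,2) i' assms(1)[symmetric]]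
      by (rule le_antisym)
  qed (fact assms)
  with assms show False by simp
qed

lemma card_sets_with_profile:
  assumes "length xs \<le> T"
  shows "card (sets_with_profile xs T) = card (cells_left_of_profile xs) choose (T - length xs)"
proof -
  let ?C = "{B'. B' \<subseteq> cells_left_of_profile xs \<and> card B' = T - length xs}"
  have disj: "cells_left_of_profile xs \<inter> profile_cells xs = {}"
    unfolding cells_left_of_profile_def profile_cells_def by auto
  have "sets_with_profile xs T = (\<lambda>B'. B' \<union> profile_cells xs) ` ?C"
  proof (intro equalityI subsetI)
    fix B assume B: "B \<in> sets_with_profile xs T"
    have "card (B - profile_cells xs) = T - length xs"
      using B by (subst card_Diff_subset) (auto simp: sets_with_profile_def card_profile_cells)
    moreover have "B = (B - profile_cells xs) \<union> profile_cells xs"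
      using B by (auto simp: sets_with_profile_def)
    ultimately show "B \<in> (\<lambda>B'. B' \<union> profile_cells xs) ` ?C"
      using B by (auto simp: sets_with_profile_def)
  next
    fix B assume "B \<in> (\<lambda>B'. B' \<union> profile_cells xs) ` ?C"
    then obtain B' where B': "B' \<in> ?C" "B = B' \<union> profile_cells xs" by blast
    have "finite B'"
      using B' by (auto intro: finite_subset[OF _ finite_cells_left_of_profile])
    moreover have "B' \<inter> profile_cells xs = {}"
      using B' disj by auto
    ultimately have "card B = T"
      using B' assms by (simp add: card_Un_disjoint card_profile_cells)
    then show "B \<in> sets_with_profile xs T"
      using B' by (auto simp: sets_with_profile_def)
  qed
  moreover have "inj_on (\<lambda>B'. B' \<union> profile_cells xs) ?C"
    using disj by (auto intro!: inj_onI)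
  ultimately show ?thesis by (simp add: card_image n_subsets)
qed

lemma finite_sets_with_profile [simp]: "finite (sets_with_profile xs T)"
  by (rule finite_subset[of _ "Pow (cells_left_of_profile xs \<union> profile_cells xs)"])
    (auto simp: sets_with_profile_def)

lemma card_row_covering_sets_by_profile:
  assumes "r \<le> T"
  shows "card (row_covering_sets r c T) =
    (\<Sum>xs\<in>bounded_words c r. (sum_list xs - r) choose (T - r))"
proof -
  have words: "length xs = r" "0 \<notin> set xs" if "xs \<in> bounded_words c r" for xs
    using that by (auto simp: bounded_words_def)
  have "card (row_covering_sets r c T) = (\<Sum>xs\<in>bounded_words c r. card (sets_with_profile xs T))"
    unfolding row_covering_sets_by_profile
    using words by (intro card_UN_disjoint ballI impI sets_with_profile_disjoint) auto
  also have "\<dots> = (\<Sum>xs\<in>bounded_words c r. (sum_list xs - r) choose (T - r))"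
  proof (rule sum.cong[OF refl])
    fix xs assume "xs \<in> bounded_words c r"
    then show "card (sets_with_profile xs T) = (sum_list xs - r) choose (T - r)"
      using words assms by (simp add: card_sets_with_profile card_cells_left_of_profile)
  qed
  finally show ?thesis .
qed

lemma card_row_covering_sets:
  assumes "1 \<le> r" "r \<le> T"
  shows "int (card (row_covering_sets r c T)) =
    (\<Sum>m=r..r*c. ibinom (int m - int r) (int T - int r) * bounded_composition_number c r (int m))"
proof -
  define g where "g m = ibinom (int m - int r) (int T - int r)" for m
  have "int (card (row_covering_sets r c T)) = (\<Sum>xs\<in>bounded_words c r. g (sum_list xs))"
    unfolding card_row_covering_sets_by_profile[OF assms(2)] of_nat_sum
  proof (rule sum.cong[OF refl])
    fix xs assume "xs \<in> bounded_words c r"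
    then have "r \<le> sum_list xs" using bounded_words_sum_list_bounds by blast
    then show "int ((sum_list xs - r) choose (T - r)) = g (sum_list xs)"
      using assms by (simp add: g_def flip: ibinom_of_nat)
  qed
  also have "\<dots> = (\<Sum>m=0..r*c. g m * bounded_composition_number c r (int m))"
    using assms by (simp add: sum_bounded_words_by_sum_list card_bounded_compositions)
  also have "\<dots> = (\<Sum>m=r..r*c. g m * bounded_composition_number c r (int m))"
    using assms by (intro sum.mono_neutral_right) (auto simp: g_def ibinom_def)
  finally show ?thesis by (simp add: g_def)
qed

lemma card_row_covering_sets_eq_alpha_TV:
  assumes "1 \<le> n" "n \<le> T"
  shows "int (card (row_covering_sets n n T)) = alpha_TV n T"
  unfolding card_row_covering_sets[OF assms] alpha_TV_def bounded_composition_number_def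
    power2_eq_square atMost_atLeast0 ..

lemma prob_pmf_of_set_PiE_dflt_all:
  assumes "finite I" "finite K" "K \<noteq> {}"
  shows "measure_pmf.prob (pmf_of_set (PiE_dflt I d (\<lambda>_. K))) {f. \<forall>i\<in>I. P (f i)} =
    (card {x\<in>K. P x} / card K) ^ card I"
proof -
  let ?S = "PiE_dflt I d (\<lambda>_. K)"
  have card_S: "card ?S = card K ^ card I"
    using assms by (simp add: card_PiE_dflt)
  moreover have "finite ?S"
    using assms by (intro finite_PiE_dflt)
  moreover have "?S \<noteq> {}"
    using calculation assms by (auto simp: card_gt_0_iff)
  moreover have "?S \<inter> {f. \<forall>i\<in>I. P (f i)} = PiE_dflt I d (\<lambda>_. {x\<in>K. P x})"
    by (auto simp: PiE_dflt_def)
  ultimately show ?thesis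
    using assms by (simp add: measure_pmf_of_set card_PiE_dflt power_divide)
qed

theorem theorem9p1:
  fixes n :: nat and \<Sigma> :: "'a set" and td :: real and T :: nat
  assumes "n \<ge> 1" and "finite \<Sigma>" and "td > 0"
    and "T = nat \<lfloor>real n * td\<rfloor>" and "n \<le> T" and "T \<le> n^2"
  shows "U_prob n \<Sigma> td = (real_of_int (alpha_TV n T) / real (beta_TV n T)) ^ card \<Sigma>"
proof -
  define K where "K = {B. B \<subseteq> {0..<n} \<times> {0..<n} \<and> card B = T}"
  have finite_K: "finite K"
    unfolding K_def by (rule finite_subset[of _ "Pow ({0..<n} \<times> {0..<n})"]) auto
  have card_K: "card K = beta_TV n T"
    using n_subsets[of "{0..<n} \<times> {0..<n}" T] by (simp add: K_def beta_TV_def power2_eq_square)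
  then have "K \<noteq> {}"
    using assms(6) by (intro notI) (simp add: beta_TV_def)
  have "TV_autos n \<Sigma> T = PiE_dflt \<Sigma> {} (\<lambda>_. K)"
    unfolding TV_autos_def PiE_dflt_def K_def by auto
  moreover have "{\<delta>. total_aut n \<Sigma> \<delta>} = {\<delta>. \<forall>a\<in>\<Sigma>. \<forall>q<n. \<exists>q'. (q, q') \<in> \<delta> a}"
    unfolding total_aut_def by blast
  ultimately have "U_prob n \<Sigma> td = (card {B\<in>K. \<forall>q<n. \<exists>q'. (q, q') \<in> B} / card K) ^ card \<Sigma>"
    unfolding U_prob_def TV_random_aut_def assms(4)[symmetric]
    using prob_pmf_of_set_PiE_dflt_all[OF assms(2) finite_K \<open>K \<noteq> {}\<close>] by simp
  also have "{B\<in>K. \<forall>q<n. \<exists>q'. (q, q') \<in> B} = row_covering_sets n n T"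
    unfolding K_def row_covering_sets_def by blast
  also have "real (card (row_covering_sets n n T)) = real_of_int (alpha_TV n T)"
    using card_row_covering_sets_eq_alpha_TV[OF assms(1,5)] by (metis of_int_of_nat_eq)
  finally show ?thesis
    unfolding card_K .
qed

end
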